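(* Let $S$ be a non-empty finite reverse-factor-free set of strings of total length $n$, and let $k_{\min}$ be the length of a shortest string that contains, for every $s\in S$, $s$ or $s^R$ as a factor. Let $w$ be an output of the algorithm Greedy-R on $S$ (for any way of breaking ties). Then $$n-|w|\;\ge\;\tfrac12\,(n-k_{\min}),$$ i.e., Greedy-R has compression ratio $\tfrac12$.
   Context: For strings $x,y$, $\mathit{ov}(x,y)$ is the length of the longest suffix of $x$ that is also a prefix of $y$; $\mathrm{pref}(x,y)$ is $x$ with its suffix of length $\mathit{ov}(x,y)$ removed, and $x\otimes y=\mathrm{pref}(x,y)\,y$. $x^R$ denotes the reversal of $x$. For a set $X$ of strings, $X^R=\{x^R: x\in X\}$ and $\widetilde{X}=X\cup X^R$. A set $X$ is reverse-factor-free if there are no distinct $x,y\in X$ such that $x$ is a factor of $y$ or of $y^R$. The procedure Make-Reverse-Factor-Free$(X)$ repeatedly removes from the current set a string $x$ for which some other string $y\neq x$ of the current set has $x$ as a factor of $y$ or of $y^R$, until no such string remains (on a reverse-factor-free set it does nothing). Algorithm Greedy-R$(S)$: first set $S:=$ Make-Reverse-Factor-Free$(S)$. Then, while $|S|>1$: among all pairs $(u,v)$ with $u,v\in\widetilde{S}$ and $u\notin\{v,v^R\}$, choose one with maximal $\mathit{ov}(u,v)$ (ties broken arbitrarily); set $S:=S\cup\{u\otimes v\}$ and then remove from $S$ all of $u,v,u^R,v^R$ that belong to $S$. Return the only element of $S$. *)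

theory Defs
  imports Main "HOL-Library.Sublist"
begin

text \<open>Strings are lists over an arbitrary alphabet 'a; "x is a factor of y" is sublist x y.\<close>

definition ov :: "'a list \<Rightarrow> 'a list \<Rightarrow> nat" where
  "ov x y = (GREATEST k. k \<le> length x \<and> k \<le> length y \<and> drop (length x - k) x = take k y)"

definition pref :: "'a list \<Rightarrow> 'a list \<Rightarrow> 'a list" where
  "pref x y = take (length x - ov x y) x"

definition otimes :: "'a list \<Rightarrow> 'a list \<Rightarrow> 'a list" where
  "otimes x y = pref x y @ y"

definition tilde :: "'a list set \<Rightarrow> 'a list set" where
  "tilde X = X \<union> rev ` X"

definition rev_factor_free :: "'a list set \<Rightarrow> bool" where
  "rev_factor_free X \<longleftrightarrow>
     (\<forall>x\<in>X. \<forall>y\<in>X. x \<noteq> y \<longrightarrow> \<not> (sublist x y \<or> sublist x (rev y)))"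

text \<open>Make-Reverse-Factor-Free as a (nondeterministic) relation: mrff X Y means Y is a possible result.\<close>
inductive mrff :: "'a list set \<Rightarrow> 'a list set \<Rightarrow> bool" where
  finished: "rev_factor_free X \<Longrightarrow> mrff X X"
| remove: "\<lbrakk> x \<in> X; y \<in> X; y \<noteq> x; sublist x y \<or> sublist x (rev y); mrff (X - {x}) Y \<rbrakk>
            \<Longrightarrow> mrff X Y"

text \<open>The merging loop of Greedy-R, with arbitrary tie-breaking: greedy_loop S w means w is a possible output.\<close>
inductive greedy_loop :: "'a list set \<Rightarrow> 'a list \<Rightarrow> bool" where
  single: "greedy_loop {w} w"
| merge: "\<lbrakk> finite S; card S > 1; u \<in> tilde S; v \<in> tilde S; u \<noteq> v; u \<noteq> rev v;
            \<forall>u'\<in>tilde S. \<forall>v'\<in>tilde S. u' \<noteq> v' \<and> u' \<noteq> rev v' \<longrightarrow> ov u' v' \<le> ov u v;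
            greedy_loop ((S \<union> {otimes u v}) - {u, v, rev u, rev v}) w \<rbrakk>
          \<Longrightarrow> greedy_loop S w"

definition greedy_R :: "'a list set \<Rightarrow> 'a list \<Rightarrow> bool" where
  "greedy_R S w \<longleftrightarrow> (\<exists>S'. mrff S S' \<and> greedy_loop S' w)"

definition total_length :: "'a list set \<Rightarrow> nat" where
  "total_length S = (\<Sum>s\<in>S. length s)"

definition k_min :: "'a list set \<Rightarrow> nat" where
  "k_min S = (LEAST k. \<exists>t. length t = k \<and> (\<forall>s\<in>S. sublist s t \<or> sublist (rev s) t))"

end

theory Submission
  imports Defs "HOL-Library.Multiset"
begin

text \<open>
Identify each string with its reversal and join two such classes by an edge weighted with the
overlap of suitable representatives. Reading the strings of a shortest common superstring
(up to reversal) by their leftmost occurrences gives a Hamiltonian path whose overlaps sum to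
at least \<open>n - k_min\<close>. Conversely, when Greedy-R merges \<open>u\<close> and \<open>v\<close> with the maximal overlap
\<open>d\<close>, the total length drops by exactly \<open>d\<close>, and every Hamiltonian path of the old instance
can be rewired into one of the new instance losing at most \<open>2 d\<close> of overlap: this uses the
maximality of \<open>d\<close> and the Monge inequality for overlaps. By induction over the merges, the
overlap of any Hamiltonian path is at most \<open>2 (n - |w|)\<close>.
\<close>

lemma ov_le_length: "ov x y \<le> length x" "ov x y \<le> length y"
  and drop_ov_eq_take_ov: "drop (length x - ov x y) x = take (ov x y) y"
proof -
  have ex: "\<exists>k. k \<le> length x \<and> k \<le> length y \<and> drop (length x - k) x = take k y"
    by (rule exI[of _ 0]) simp
  have "ov x y \<le> length x \<and> ov x y \<le> length y \<and> drop (length x - ov x y) x = take (ov x y) y"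
    unfolding ov_def by (rule GreatestI_ex_nat[OF ex, of "length x"]) auto
  then show "ov x y \<le> length x" "ov x y \<le> length y"
    "drop (length x - ov x y) x = take (ov x y) y" by blast+
qed

lemma ov_greatest:
  assumes "k \<le> length x" "k \<le> length y" "drop (length x - k) x = take k y"
  shows "k \<le> ov x y"
  unfolding ov_def by (rule Greatest_le_nat[of _ k "length x"]) (use assms in auto)

lemma ov_rev_rev: "ov (rev y) (rev x) = ov x y"
proof -
  have le: "ov x y \<le> ov (rev y) (rev x)" for x y :: "'b list"
  proof (rule ov_greatest)
    show "ov x y \<le> length (rev y)" "ov x y \<le> length (rev x)" using ov_le_length by auto
    have "drop (length (rev y) - ov x y) (rev y) = rev (take (ov x y) y)"
      by (simp add: rev_take)
    also have "\<dots> = rev (drop (length x - ov x y) x)" by (simp add: drop_ov_eq_take_ov)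
    also have "\<dots> = take (ov x y) (rev x)" using ov_le_length[of x y] by (simp add: rev_drop)
    finally show "drop (length (rev y) - ov x y) (rev y) = take (ov x y) (rev x)" .
  qed
  show ?thesis using le[of x y] le[of "rev y" "rev x"] by simp
qed

lemma ov_prefix_mono:
  assumes "prefix y y'" shows "ov x y \<le> ov x y'"
proof (rule ov_greatest)
  obtain z where y': "y' = y @ z" using assms prefixE by blast
  show "ov x y \<le> length x" "ov x y \<le> length y'" using ov_le_length[of x y] y' by auto
  show "drop (length x - ov x y) x = take (ov x y) y'"
    using y' ov_le_length[of x y] by (simp add: drop_ov_eq_take_ov)
qed

lemma ov_suffix_mono:
  assumes "suffix x x'" shows "ov x y \<le> ov x' y"
proof (rule ov_greatest)
  obtain z where x': "x' = z @ x" using assms suffixE by blast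
  show "ov x y \<le> length x'" "ov x y \<le> length y" using ov_le_length[of x y] x' by auto
  show "drop (length x' - ov x y) x' = take (ov x y) y"
    using x' ov_le_length[of x y] by (simp add: drop_ov_eq_take_ov)
qed

lemma otimes_eq: "otimes u v = take (length u - ov u v) u @ v"
  by (simp add: otimes_def pref_def)

lemma prefix_otimes: "prefix u (otimes u v)"
proof -
  have "u = take (length u - ov u v) u @ take (ov u v) v"
    by (metis append_take_drop_id drop_ov_eq_take_ov)
  also have "prefix \<dots> (take (length u - ov u v) u @ v)" by (simp add: take_is_prefix)
  finally show ?thesis by (simp add: otimes_eq)
qed

lemma suffix_otimes: "suffix v (otimes u v)"
  by (simp add: otimes_eq suffix_def)

lemma length_otimes: "length (otimes u v) = length u - ov u v + length v"
  using ov_le_length[of u v] by (simp add: otimes_eq)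

text \<open>If the overlaps \<open>ov c v\<close> and \<open>ov u b\<close> together exceed \<open>ov u v \<ge> max (ov c v) (ov u b)\<close>,
  the suffix of \<open>c\<close> and the prefix of \<open>b\<close> both sit inside the common part of \<open>u\<close> and \<open>v\<close>,
  where they overlap by the excess.\<close>

lemma ov_Monge:
  assumes "ov c v \<le> ov u v" "ov u b \<le> ov u v"
  shows "ov c v + ov u b \<le> ov c b + ov u v"
proof (cases "ov c v + ov u b \<le> ov u v")
  case False
  define a where "a = ov c v"
  define e where "e = ov u b"
  define d where "d = ov u v"
  define k where "k = a + e - d"
  have sa: "a \<le> length c" "a \<le> length v" "drop (length c - a) c = take a v"
    unfolding a_def by (rule ov_le_length ov_le_length drop_ov_eq_take_ov)+
  have se: "e \<le> length u" "e \<le> length b" "drop (length u - e) u = take e b"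
    unfolding e_def by (rule ov_le_length ov_le_length drop_ov_eq_take_ov)+
  have sd: "d \<le> length u" "d \<le> length v" "drop (length u - d) u = take d v"
    unfolding d_def by (rule ov_le_length ov_le_length drop_ov_eq_take_ov)+
  have ad: "a \<le> d" "e \<le> d" "d < a + e" using assms False unfolding a_def e_def d_def by auto
  have "k \<le> ov c b"
  proof (rule ov_greatest)
    show "k \<le> length c" "k \<le> length b" using sa se ad unfolding k_def by auto
    have split: "length c - k = (a - k) + (length c - a)" using sa ad unfolding k_def by arith
    have "drop (length c - k) c = drop (a - k) (drop (length c - a) c)"
      by (simp only: split drop_drop)
    also have "\<dots> = drop (a - k) (take a (take d v))" using sa ad by simp
    also have "\<dots> = drop (a - k) (take a (drop (length u - d) u))" using sd by simp
    also have "\<dots> = take k (drop (length u - d + (a - k)) u)"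
      using ad sd(1) unfolding k_def by (simp add: drop_take add.commute)
    also have "length u - d + (a - k) = length u - e" using ad sd unfolding k_def by simp
    also have "take k (drop (length u - e) u) = take k b" using se ad unfolding k_def by simp
    finally show "drop (length c - k) c = take k b" .
  qed
  then show ?thesis using ad unfolding k_def a_def e_def d_def by simp
qed simp

lemma split_list_pair:
  assumes "x \<in> set xs" "y \<in> set xs" "x \<noteq> y"
  obtains L M R where "xs = L @ x # M @ y # R" | L M R where "xs = L @ y # M @ x # R"
proof -
  obtain L R where xs: "xs = L @ x # R" using assms(1) split_list by metis
  then have "y \<in> set L \<or> y \<in> set R" using assms by auto
  then show ?thesis
  proof
    assume "y \<in> set L"
    then obtain L' M where "L = L' @ y # M" using split_list by metis
    then show ?thesis using that(2) xs by simp
  next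
    assume "y \<in> set R"
    then obtain M R' where "R = M @ y # R'" using split_list by metis
    then show ?thesis using that(1) xs by simp
  qed
qed

lemma sublist_concat: "x \<in> set xss \<Longrightarrow> sublist x (concat xss)"
  by (metis concat.simps(2) concat_append in_set_conv_decomp sublist_appendI)

fun path_ov :: "'a list list \<Rightarrow> nat" where
  "path_ov (x # y # zs) = ov x y + path_ov (y # zs)"
| "path_ov _ = 0"

lemma path_ov_Cons: "path_ov (x # xs) = (if xs = [] then 0 else ov x (hd xs)) + path_ov xs"
  by (cases xs) auto

lemma path_ov_snoc: "path_ov (xs @ [x]) = path_ov xs + (if xs = [] then 0 else ov (last xs) x)"
  by (induction xs rule: path_ov.induct) auto

lemma path_ov_append_Cons: "path_ov (xs @ x # ys) = path_ov (xs @ [x]) + path_ov (x # ys)"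
  by (induction xs rule: path_ov.induct) auto

lemma path_ov_append:
  "xs \<noteq> [] \<Longrightarrow> ys \<noteq> [] \<Longrightarrow> path_ov (xs @ ys) = path_ov xs + ov (last xs) (hd ys) + path_ov ys"
  by (cases ys) (auto simp: path_ov_append_Cons[of xs] path_ov_snoc)

lemma path_ov_append_ge: "path_ov xs + path_ov ys \<le> path_ov (xs @ ys)"
  by (cases "xs = [] \<or> ys = []") (auto simp: path_ov_append)

lemma path_ov_Cons_le: "\<forall>y\<in>set xs. ov x y \<le> d \<Longrightarrow> path_ov (x # xs) \<le> d + path_ov xs"
  by (cases xs) auto

lemma path_ov_snoc_le: "\<forall>y\<in>set xs. ov y x \<le> d \<Longrightarrow> path_ov (xs @ [x]) \<le> path_ov xs + d"
  by (cases "xs = []") (auto simp: path_ov_snoc)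

lemma path_ov_snoc_mono: "\<forall>y. ov y x \<le> ov y x' \<Longrightarrow> path_ov (xs @ [x]) \<le> path_ov (xs @ [x'])"
  by (simp add: path_ov_snoc)

lemma path_ov_Cons_mono: "\<forall>y. ov x y \<le> ov x' y \<Longrightarrow> path_ov (x # xs) \<le> path_ov (x' # xs)"
  by (simp add: path_ov_Cons)

lemma path_ov_Monge:
  assumes "\<forall>c\<in>set xs. ov c v \<le> ov u v" "\<forall>b\<in>set ys. ov u b \<le> ov u v"
  shows "path_ov (xs @ [v]) + path_ov (u # ys) \<le> path_ov (xs @ ys) + ov u v"
proof (cases "xs = [] \<or> ys = []")
  case True
  then show ?thesis
    using path_ov_Cons_le[of ys u "ov u v"] path_ov_snoc_le[of xs v "ov u v"] assms by auto
next
  case False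
  have "ov (last xs) v + ov u (hd ys) \<le> ov (last xs) (hd ys) + ov u v"
    using ov_Monge[of "last xs" v u "hd ys"] assms False by simp
  then show ?thesis using False by (simp add: path_ov_append path_ov_snoc path_ov_Cons)
qed

definition rev_path :: "'a list list \<Rightarrow> 'a list list" where
  "rev_path xs = rev (map rev xs)"

lemma rev_path_snoc: "rev_path (xs @ [x]) = rev x # rev_path xs"
  by (simp add: rev_path_def)

lemma path_ov_rev_path: "path_ov (rev_path xs) = path_ov xs"
proof (induction xs)
  case (Cons x xs)
  have "path_ov (rev_path (x # xs)) = path_ov (rev_path xs @ [rev x])" by (simp add: rev_path_def)
  also have "\<dots> = path_ov (x # xs)"
    using Cons by (simp add: path_ov_snoc path_ov_Cons rev_path_def last_rev hd_map ov_rev_rev)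
  finally show ?case .
qed (simp add: rev_path_def)

definition rclass :: "'a list \<Rightarrow> 'a list set" where
  "rclass x = {x, rev x}"

lemma rclass_eq_iff: "rclass x = rclass y \<longleftrightarrow> x = y \<or> x = rev y"
  by (auto simp: rclass_def doubleton_eq_iff)

lemma rclass_rev [simp]: "rclass (rev x) = rclass x"
  by (auto simp: rclass_def)

lemma map_rclass_rev_path [simp]: "map rclass (rev_path xs) = rev (map rclass xs)"
  by (simp add: rev_path_def rev_map comp_def)

lemma in_tilde_iff: "x \<in> tilde T \<longleftrightarrow> (\<exists>s\<in>T. rclass x = rclass s)"
  by (auto simp: tilde_def rclass_eq_iff)

lemma rev_factor_free_rclass_inj:
  "rev_factor_free T \<Longrightarrow> s \<in> T \<Longrightarrow> s' \<in> T \<Longrightarrow> rclass s = rclass s' \<Longrightarrow> s = s'"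
  unfolding rev_factor_free_def rclass_eq_iff by force

lemma rev_factor_free_subset: "rev_factor_free T \<Longrightarrow> T' \<subseteq> T \<Longrightarrow> rev_factor_free T'"
  unfolding rev_factor_free_def by blast

lemma rev_factor_free_not_sublist:
  assumes "rev_factor_free T" "x \<in> tilde T" "y \<in> tilde T" "rclass x \<noteq> rclass y"
  shows "\<not> sublist x y"
proof
  assume sub: "sublist x y"
  obtain s where s: "s \<in> T" "rclass x = rclass s" using assms in_tilde_iff by blast
  obtain s' where s': "s' \<in> T" "rclass y = rclass s'" using assms in_tilde_iff by blast
  have "s \<noteq> s'" using s s' assms by auto
  then have "\<not> sublist s s'" "\<not> sublist s (rev s')"
    using assms s s' unfolding rev_factor_free_def by auto
  moreover have "x = s \<or> x = rev s" "y = s' \<or> y = rev s'" using s s' by (auto simp: rclass_eq_iff)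
  ultimately show False using sub by (metis rev_rev_ident sublist_rev)
qed

definition ham_path :: "'a list set \<Rightarrow> 'a list list \<Rightarrow> bool" where
  "ham_path T xs \<longleftrightarrow> distinct (map rclass xs) \<and> rclass ` set xs = rclass ` T"

lemma ham_path_rev_path: "ham_path T xs \<Longrightarrow> ham_path T (rev_path xs)"
  by (metis ham_path_def distinct_rev map_rclass_rev_path set_map set_rev)

lemma ham_path_in_tilde: "ham_path T xs \<Longrightarrow> x \<in> set xs \<Longrightarrow> x \<in> tilde T"
  unfolding ham_path_def in_tilde_iff by blast

lemma ham_path_distinct: "ham_path T xs \<Longrightarrow> distinct xs"
  by (simp add: ham_path_def distinct_map)

lemma path_ov_ham_path_singleton: "ham_path {w} xs \<Longrightarrow> path_ov xs = 0"
proof -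
  assume "ham_path {w} xs"
  then have "distinct (map rclass xs)" "set (map rclass xs) = {rclass w}"
    unfolding ham_path_def by auto
  then have "length xs = 1" using distinct_card by fastforce
  then show ?thesis by (cases xs) auto
qed

locale greedy_merge =
  fixes T :: "'a list set" and u v :: "'a list"
  assumes finite_T: "finite T" and rff_T: "rev_factor_free T"
    and u_in: "u \<in> tilde T" and v_in: "v \<in> tilde T"
    and u_neq_v: "u \<noteq> v" and u_neq_rev_v: "u \<noteq> rev v"
    and ov_max: "\<forall>u'\<in>tilde T. \<forall>v'\<in>tilde T. u' \<noteq> v' \<and> u' \<noteq> rev v' \<longrightarrow> ov u' v' \<le> ov u v"
begin

definition "rest = {z \<in> T. rclass z \<noteq> rclass u \<and> rclass z \<noteq> rclass v}"
definition "merged = otimes u v"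
definition "d = ov u v"

lemma rclass_u_neq_v: "rclass u \<noteq> rclass v"
  using u_neq_v u_neq_rev_v by (auto simp: rclass_eq_iff)

lemma ov_le_d: "x \<in> tilde T \<Longrightarrow> y \<in> tilde T \<Longrightarrow> rclass x \<noteq> rclass y \<Longrightarrow> ov x y \<le> d"
  using ov_max unfolding d_def by (metis rclass_eq_iff)

lemma ov_le_d_on_path:
  assumes "ham_path T xs" "x \<in> set xs" "y \<in> set xs" "x \<noteq> y"
  shows "ov x y \<le> d"
proof -
  have "inj_on rclass (set xs)" using assms(1) by (simp add: ham_path_def distinct_map)
  then have "rclass x \<noteq> rclass y" using assms(2-4) by (auto dest: inj_onD)
  then show ?thesis using ov_le_d ham_path_in_tilde assms(1-3) by blast
qed

lemma d_less_length: "d < length u" "d < length v"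
proof -
  have d: "d \<le> length u" "d \<le> length v" "drop (length u - d) u = take d v"
    unfolding d_def by (rule ov_le_length ov_le_length drop_ov_eq_take_ov)+
  show "d < length u"
  proof (rule ccontr)
    assume "\<not> d < length u"
    then have "d = length u" using d by simp
    then have "prefix u v" using d by (metis take_is_prefix diff_self_eq_0 drop_0)
    then show False using rev_factor_free_not_sublist[OF rff_T u_in v_in rclass_u_neq_v] by auto
  qed
  show "d < length v"
  proof (rule ccontr)
    assume "\<not> d < length v"
    then have "d = length v" using d by simp
    then have "suffix v u" using d by (metis suffix_drop take_all_iff order_refl)
    then show False
      using rev_factor_free_not_sublist[OF rff_T v_in u_in] rclass_u_neq_v by auto
  qed
qed

lemma length_merged: "length merged = length u + length v - d"
  using length_otimes[of u v] d_less_length unfolding merged_def d_def by simp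

lemma merged_set_eq: "(T \<union> {merged}) - {u, v, rev u, rev v} = rest \<union> {merged}"
proof -
  have "merged \<notin> {u, v, rev u, rev v}" using length_merged d_less_length by auto
  moreover have "z \<in> {u, v, rev u, rev v} \<longleftrightarrow> rclass z = rclass u \<or> rclass z = rclass v" for z
    by (auto simp: rclass_eq_iff)
  ultimately show ?thesis unfolding rest_def by auto
qed

lemma rest_in_tilde: "z \<in> rest \<Longrightarrow> y \<in> rclass z \<Longrightarrow> y \<in> tilde T \<and> rclass y = rclass z"
  by (auto simp: rest_def tilde_def rclass_def)

lemma not_sublist_rest: "z \<in> rest \<Longrightarrow> y \<in> rclass z \<Longrightarrow> \<not> sublist u y"
  using rev_factor_free_not_sublist[OF rff_T u_in, of y] rest_in_tilde[of z y]
  unfolding rest_def by auto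

lemma rclass_merged_notin: "rclass merged \<notin> rclass ` rest"
proof
  assume "rclass merged \<in> rclass ` rest"
  then obtain z where z: "z \<in> rest" "merged \<in> rclass z" by (auto simp: rclass_def)
  moreover have "sublist u merged" using prefix_otimes unfolding merged_def by blast
  ultimately show False using not_sublist_rest by blast
qed

text \<open>A factor of \<open>merged\<close> that is a factor of neither \<open>u\<close> nor \<open>v\<close> straddles the junction,
  so it starts with a suffix of \<open>u\<close> longer than \<open>d\<close>.\<close>

lemma not_sublist_merged:
  assumes "\<not> sublist y u" "\<not> sublist y v" "ov u y \<le> d"
  shows "\<not> sublist y merged"
proof
  assume "sublist y merged"
  then obtain a b where ab: "merged = a @ y @ b" by (auto simp: sublist_def)
  define m where "m = length u - d"
  have merged_eq: "merged = take m u @ v" unfolding merged_def m_def d_def by (simp add: otimes_eq)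
  have lm: "length (take m u) = m" using d_less_length unfolding m_def by simp
  have pu: "take (length u) merged = u" using prefix_otimes[of u v] unfolding merged_def
    by (metis append_eq_conv_conj prefixE)
  consider "m \<le> length a" | "length a < m" "length a + length y \<le> length u"
    | "length a < m" "length u < length a + length y" by linarith
  then show False
  proof cases
    case 1
    have "v = drop m merged" using merged_eq lm by simp
    also have "\<dots> = drop m a @ y @ b" using ab 1 by simp
    finally show False using assms(2) by (metis sublist_appendI)
  next
    case 2
    then have "take (length u) merged = a @ y @ take (length u - length a - length y) b"
      using ab by simp
    then show False using pu assms(1) by (metis sublist_appendI)
  next
    case 3
    define k where "k = length u - length a"
    have "k \<le> ov u y"
    proof (rule ov_greatest)
      show "k \<le> length u" "k \<le> length y" using 3 unfolding k_def by auto
      have "drop (length u - k) u = drop (length a) (take (length u) merged)"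
        using pu 3 d_less_length unfolding k_def m_def by simp
      also have "\<dots> = take k (drop (length a) merged)" unfolding k_def by (simp add: drop_take)
      also have "\<dots> = take k (y @ b)" using ab by simp
      also have "\<dots> = take k y" using 3 unfolding k_def by simp
      finally show "drop (length u - k) u = take k y" .
    qed
    then show False using 3 d_less_length assms(3) unfolding k_def m_def by simp
  qed
qed

lemma rev_factor_free_merged: "rev_factor_free (rest \<union> {merged})"
proof -
  have u_merged: "sublist u merged" using prefix_otimes unfolding merged_def by blast
  have merged_rest: "\<not> sublist merged y" if "z \<in> rest" "y \<in> rclass z" for z y
    using not_sublist_rest[OF that] sublist_order.order_trans[OF u_merged] by blast
  have rest_merged: "\<not> sublist y merged" if "z \<in> rest" "y \<in> rclass z" for z y
  proof (rule not_sublist_merged)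
    have y: "y \<in> tilde T" "rclass y \<noteq> rclass u" "rclass y \<noteq> rclass v"
      using rest_in_tilde[OF that] that(1) unfolding rest_def by auto
    show "\<not> sublist y u" using rev_factor_free_not_sublist[OF rff_T y(1) u_in y(2)] .
    show "\<not> sublist y v" using rev_factor_free_not_sublist[OF rff_T y(1) v_in y(3)] .
    show "ov u y \<le> d" using ov_le_d[OF u_in y(1)] y(2) by auto
  qed
  have rff_rest: "rev_factor_free rest"
    by (rule rev_factor_free_subset[OF rff_T]) (auto simp: rest_def)
  show ?thesis unfolding rev_factor_free_def
  proof (intro ballI impI)
    fix x y assume xy: "x \<in> rest \<union> {merged}" "y \<in> rest \<union> {merged}" "x \<noteq> y"
    consider "x = merged" "y \<in> rest" | "x \<in> rest" "y = merged" | "x \<in> rest" "y \<in> rest"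
      using xy by auto
    then show "\<not> (sublist x y \<or> sublist x (rev y))"
    proof cases
      case 1
      then show ?thesis
        using merged_rest[of y y] merged_rest[of y "rev y"] by (simp add: rclass_def)
    next
      case 2
      then show ?thesis using rest_merged[of x x] rest_merged[of x "rev x"]
        by (simp add: rclass_def sublist_rev_right)
    next
      case 3
      then show ?thesis using rff_rest xy(3) unfolding rev_factor_free_def by blast
    qed
  qed
qed

lemma total_length_merged: "total_length (rest \<union> {merged}) + d = total_length T"
proof -
  obtain su where su: "su \<in> T" "rclass u = rclass su" using u_in in_tilde_iff by blast
  obtain sv where sv: "sv \<in> T" "rclass v = rclass sv" using v_in in_tilde_iff by blast
  have T_eq: "T = insert su (insert sv rest)" "su \<noteq> sv" "su \<notin> rest" "sv \<notin> rest"
    using su sv rev_factor_free_rclass_inj[OF rff_T] rclass_u_neq_v unfolding rest_def by auto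
  have fin: "finite rest" using finite_T unfolding rest_def by simp
  have "length su = length u" "length sv = length v" using su sv by (auto simp: rclass_eq_iff)
  then have "sum length (insert su (insert sv rest)) = total_length rest + length u + length v"
    unfolding total_length_def using T_eq(2-4) fin by simp
  \<comment> \<open>\<open>T\<close> occurs inside \<open>rest\<close>, so rewriting with \<open>T_eq\<close> would not terminate.\<close>
  then have "total_length T = total_length rest + length u + length v"
    unfolding total_length_def using T_eq(1) by metis
  moreover have "merged \<notin> rest" using rclass_merged_notin by blast
  then have "total_length (rest \<union> {merged}) = total_length rest + length merged"
    unfolding total_length_def using fin by simp
  ultimately show ?thesis using length_merged d_less_length by simp
qed

lemma ham_path_merged:
  assumes p: "ham_path T xs" and xs: "mset (map rclass xs) = mset (cs @ [rclass u, rclass v])"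
    and ys: "mset (map rclass ys) = mset (cs @ [rclass merged])"
  shows "ham_path (rest \<union> {merged}) ys"
proof -
  have dist: "distinct (cs @ [rclass u, rclass v])"
    using p xs mset_eq_imp_distinct_iff unfolding ham_path_def by blast
  have set_xs: "set (cs @ [rclass u, rclass v]) = rclass ` T"
    using p xs mset_eq_setD unfolding ham_path_def by (metis set_map)
  have cs: "set cs = rclass ` rest"
  proof
    show "set cs \<subseteq> rclass ` rest"
    proof
      fix c assume c: "c \<in> set cs"
      have "c \<in> rclass ` T" using set_xs c by auto
      then obtain z where "z \<in> T" "c = rclass z" by blast
      moreover have "c \<noteq> rclass u" "c \<noteq> rclass v" using dist c by auto
      ultimately show "c \<in> rclass ` rest" unfolding rest_def by auto
    qed
    show "rclass ` rest \<subseteq> set cs" using set_xs unfolding rest_def by auto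
  qed
  then have "distinct (cs @ [rclass merged])" using dist rclass_merged_notin by auto
  then have "distinct (map rclass ys)" using ys mset_eq_imp_distinct_iff by blast
  moreover have "rclass ` set ys = rclass ` (rest \<union> {merged})"
    using ys cs mset_eq_setD by (metis image_Un image_empty image_insert list.set_map set_append
        list.set(1) list.set(2))
  ultimately show ?thesis unfolding ham_path_def by blast
qed

lemma ov_le_merged: "ov x u \<le> ov x merged" "ov v x \<le> ov merged x"
  unfolding merged_def by (simp_all add: ov_prefix_mono prefix_otimes ov_suffix_mono suffix_otimes)

text \<open>In each case the
  edges at \<open>u\<close> and \<open>v\<close> that are cut weigh at most \<open>d\<close> each, except for those that the merged
  string inherits; the remaining segments are glued back in some order.\<close>

lemma path_ov_u_before_v:
  assumes p: "ham_path T (L @ u # M @ v # R)"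
  shows "path_ov (L @ u # M @ v # R) \<le> path_ov (L @ merged # R @ M) + 2 * d"
proof -
  have "distinct (L @ u # M @ v # R)" using p by (rule ham_path_distinct)
  note le_d = ov_le_d_on_path[OF p]
  have "path_ov (L @ u # M @ v # R) = path_ov (L @ [u]) + path_ov (u # M @ [v]) + path_ov (v # R)"
    using path_ov_append_Cons[of L u "M @ v # R"] path_ov_append_Cons[of "u # M" v R] by simp
  moreover have "path_ov (u # M @ [v]) \<le> d + path_ov (M @ [v])"
    by (rule path_ov_Cons_le) (use \<open>distinct _\<close> in \<open>auto intro!: le_d\<close>)
  moreover have "path_ov (M @ [v]) \<le> path_ov M + d"
    by (rule path_ov_snoc_le) (use \<open>distinct _\<close> in \<open>auto intro!: le_d\<close>)
  moreover have "path_ov (L @ [u]) \<le> path_ov (L @ [merged])"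
    using ov_le_merged by (simp add: path_ov_snoc_mono)
  moreover have "path_ov (v # R) \<le> path_ov (merged # R)"
    using ov_le_merged by (simp add: path_ov_Cons_mono)
  moreover have "path_ov (L @ [merged]) + path_ov (merged # R) + path_ov M
      \<le> path_ov (L @ merged # R @ M)"
    using path_ov_append_Cons[of L merged "R @ M"] path_ov_append_ge[of "merged # R" M] by simp
  ultimately show ?thesis by simp
qed

lemma path_ov_v_before_u:
  assumes p: "ham_path T (L @ v # M @ u # R)"
  shows "path_ov (L @ v # M @ u # R) \<le> path_ov (L @ R @ M @ [merged]) + 2 * d"
proof -
  have "distinct (L @ v # M @ u # R)" using p by (rule ham_path_distinct)
  note le_d = ov_le_d_on_path[OF p]
  have "path_ov (L @ v # M @ u # R) = path_ov (L @ [v]) + path_ov (v # M @ [u]) + path_ov (u # R)"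
    using path_ov_append_Cons[of L v "M @ u # R"] path_ov_append_Cons[of "v # M" u R] by simp
  moreover have "path_ov (v # M @ [u]) \<le> d + path_ov (M @ [u])"
    by (rule path_ov_Cons_le) (use \<open>distinct _\<close> in \<open>auto intro!: le_d\<close>)
  moreover have "path_ov (M @ [u]) \<le> path_ov (M @ [merged])"
    using ov_le_merged by (simp add: path_ov_snoc_mono)
  moreover have "path_ov (L @ [v]) + path_ov (u # R) \<le> path_ov (L @ R) + d"
    unfolding d_def
    by (rule path_ov_Monge) (use \<open>distinct _\<close> in \<open>auto intro!: le_d[unfolded d_def]\<close>)
  moreover have "path_ov (L @ R) + path_ov (M @ [merged]) \<le> path_ov (L @ R @ M @ [merged])"
    using path_ov_append_ge[of "L @ R"] by simp
  ultimately show ?thesis by simp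
qed

lemma path_ov_u_before_rev_v:
  assumes p: "ham_path T (L @ u # M @ rev v # R)"
  shows "path_ov (L @ u # M @ rev v # R) \<le> path_ov (L @ merged # rev_path M @ R) + 2 * d"
proof -
  have "distinct (L @ u # M @ rev v # R)" using p by (rule ham_path_distinct)
  note le_d = ov_le_d_on_path[OF p]
  have "path_ov (L @ u # M @ rev v # R)
      = path_ov (L @ [u]) + path_ov (u # M @ [rev v]) + path_ov (rev v # R)"
    using path_ov_append_Cons[of L u "M @ rev v # R"] path_ov_append_Cons[of "u # M" "rev v" R]
    by simp
  moreover have "path_ov (u # M @ [rev v]) \<le> d + path_ov (M @ [rev v])"
    by (rule path_ov_Cons_le) (use \<open>distinct _\<close> in \<open>auto intro!: le_d\<close>)
  moreover have "path_ov (M @ [rev v]) \<le> path_ov (merged # rev_path M)"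
    using path_ov_rev_path[of "M @ [rev v]"] path_ov_Cons_mono[of v merged "rev_path M"]
      ov_le_merged by (simp add: rev_path_snoc)
  moreover have "path_ov (L @ [u]) \<le> path_ov (L @ [merged])"
    using ov_le_merged by (simp add: path_ov_snoc_mono)
  moreover have "path_ov (rev v # R) \<le> d + path_ov R"
    by (rule path_ov_Cons_le) (use \<open>distinct _\<close> in \<open>auto intro!: le_d\<close>)
  moreover have "path_ov (L @ [merged]) + path_ov (merged # rev_path M) + path_ov R
      \<le> path_ov (L @ merged # rev_path M @ R)"
    using path_ov_append_Cons[of L merged "rev_path M @ R"]
      path_ov_append_ge[of "merged # rev_path M" R] by simp
  ultimately show ?thesis by simp
qed

lemma path_ov_rev_v_before_u:
  assumes p: "ham_path T (L @ rev v # M @ u # R)"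
  shows "path_ov (L @ rev v # M @ u # R) \<le> path_ov (M @ merged # rev_path L @ R) + 2 * d"
proof -
  have "distinct (L @ rev v # M @ u # R)" using p by (rule ham_path_distinct)
  note le_d = ov_le_d_on_path[OF p]
  have "path_ov (L @ rev v # M @ u # R)
      = path_ov (L @ [rev v]) + path_ov (rev v # M @ [u]) + path_ov (u # R)"
    using path_ov_append_Cons[of L "rev v" "M @ u # R"] path_ov_append_Cons[of "rev v # M" u R]
    by simp
  moreover have "path_ov (rev v # M @ [u]) \<le> d + path_ov (M @ [u])"
    by (rule path_ov_Cons_le) (use \<open>distinct _\<close> in \<open>auto intro!: le_d\<close>)
  moreover have "path_ov (M @ [u]) \<le> path_ov (M @ [merged])"
    using ov_le_merged by (simp add: path_ov_snoc_mono)
  moreover have "path_ov (L @ [rev v]) \<le> path_ov (merged # rev_path L)"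
    using path_ov_rev_path[of "L @ [rev v]"] path_ov_Cons_mono[of v merged "rev_path L"]
      ov_le_merged by (simp add: rev_path_snoc)
  moreover have "path_ov (u # R) \<le> d + path_ov R"
    by (rule path_ov_Cons_le) (use \<open>distinct _\<close> in \<open>auto intro!: le_d\<close>)
  moreover have "path_ov (M @ [merged]) + path_ov (merged # rev_path L) + path_ov R
      \<le> path_ov (M @ merged # rev_path L @ R)"
    using path_ov_append_Cons[of M merged "rev_path L @ R"]
      path_ov_append_ge[of "merged # rev_path L" R] by simp
  ultimately show ?thesis by simp
qed

lemma ham_path_merge_step_from_u:
  assumes p: "ham_path T xs" and u: "u \<in> set xs"
  shows "\<exists>ys. ham_path (rest \<union> {merged}) ys \<and> path_ov xs \<le> path_ov ys + 2 * d"
proof -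
  have "rclass v \<in> rclass ` set xs" using p v_in unfolding ham_path_def in_tilde_iff by auto
  then have "v \<in> set xs \<or> rev v \<in> set xs" by (auto simp: rclass_eq_iff)
  moreover have "u \<noteq> v" "u \<noteq> rev v" using u_neq_v u_neq_rev_v by auto
  ultimately consider L M R where "xs = L @ u # M @ v # R" | L M R where "xs = L @ v # M @ u # R"
    | L M R where "xs = L @ u # M @ rev v # R" | L M R where "xs = L @ rev v # M @ u # R"
    using split_list_pair[OF u] by metis
  then show ?thesis
  proof cases
    case (1 L M R)
    have "ham_path (rest \<union> {merged}) (L @ merged # R @ M)"
      by (rule ham_path_merged[OF p, of "map rclass (L @ M @ R)"]) (auto simp: 1)
    then show ?thesis using path_ov_u_before_v p 1 by blast
  next
    case (2 L M R)
    have "ham_path (rest \<union> {merged}) (L @ R @ M @ [merged])"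
      by (rule ham_path_merged[OF p, of "map rclass (L @ M @ R)"]) (auto simp: 2)
    then show ?thesis using path_ov_v_before_u p 2 by blast
  next
    case (3 L M R)
    have "ham_path (rest \<union> {merged}) (L @ merged # rev_path M @ R)"
      by (rule ham_path_merged[OF p, of "map rclass (L @ M @ R)"]) (auto simp: 3)
    then show ?thesis using path_ov_u_before_rev_v p 3 by blast
  next
    case (4 L M R)
    have "ham_path (rest \<union> {merged}) (M @ merged # rev_path L @ R)"
      by (rule ham_path_merged[OF p, of "map rclass (L @ M @ R)"]) (auto simp: 4)
    then show ?thesis using path_ov_rev_v_before_u p 4 by blast
  qed
qed

lemma ham_path_merge_step:
  assumes p: "ham_path T xs"
  obtains ys where "ham_path (rest \<union> {merged}) ys" "path_ov xs \<le> path_ov ys + 2 * d"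
proof -
  have "rclass u \<in> rclass ` set xs" using p u_in unfolding ham_path_def in_tilde_iff by auto
  then have "u \<in> set xs \<or> u \<in> set (rev_path xs)"
    by (auto simp: rclass_eq_iff rev_path_def)
  then show ?thesis
    using ham_path_merge_step_from_u[OF p] ham_path_merge_step_from_u[OF ham_path_rev_path[OF p]]
      path_ov_rev_path[of xs] that by metis
qed

end

lemma greedy_loop_compression:
  assumes "greedy_loop T w" "finite T" "rev_factor_free T" "ham_path T xs"
  shows "path_ov xs + 2 * length w \<le> 2 * total_length T"
  using assms
proof (induction arbitrary: xs rule: greedy_loop.induct)
  case (single w)
  then show ?case using path_ov_ham_path_singleton[of w xs] by (simp add: total_length_def)
next
  case (merge S u v w)
  interpret greedy_merge S u v using merge by unfold_locales auto
  obtain ys where ys: "ham_path (rest \<union> {merged}) ys" "path_ov xs \<le> path_ov ys + 2 * d"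
    using ham_path_merge_step[OF merge.prems(3)] .
  have "finite (rest \<union> {merged})" using finite_T unfolding rest_def by simp
  then have "path_ov ys + 2 * length w \<le> 2 * total_length (rest \<union> {merged})"
    using merge.IH ys(1) finite_T rev_factor_free_merged merged_set_eq unfolding merged_def by simp
  then show ?case using ys(2) total_length_merged by linarith
qed

definition rev_superstring :: "'a list set \<Rightarrow> 'a list \<Rightarrow> bool" where
  "rev_superstring T t \<longleftrightarrow> (\<forall>s\<in>T. sublist s t \<or> sublist (rev s) t)"

lemma rev_superstring_leftmost:
  assumes "T \<noteq> {}" "rev_superstring T t"
  obtains p y where "p \<le> length t" "y \<in> tilde T" "prefix y (drop p t)"
    "rev_superstring T (drop p t)"
proof -
  define P where "P = {n. \<exists>ps y ss. y \<in> tilde T \<and> t = ps @ y @ ss \<and> n = length ps}"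
  have occ: "length ps \<in> P" if "s \<in> T" "y = s \<or> y = rev s" "t = ps @ y @ ss" for s y ps ss
    using that unfolding P_def tilde_def by blast
  obtain s0 where "s0 \<in> T" using assms(1) by blast
  then obtain y ps ss where "y = s0 \<or> y = rev s0" "t = ps @ y @ ss"
    using assms(2) unfolding rev_superstring_def sublist_def by blast
  then have "P \<noteq> {}" using occ[OF \<open>s0 \<in> T\<close>] by blast
  define p where "p = (LEAST n. n \<in> P)"
  have "p \<in> P" unfolding p_def using \<open>P \<noteq> {}\<close> by (auto intro: LeastI)
  then obtain ps y ss where pys: "y \<in> tilde T" "t = ps @ y @ ss" "p = length ps"
    unfolding P_def by blast
  have "rev_superstring T (drop p t)"
    unfolding rev_superstring_def
  proof
    fix s assume s: "s \<in> T"
    then obtain y' ps' ss' where y': "y' = s \<or> y' = rev s" "t = ps' @ y' @ ss'"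
      using assms(2) unfolding rev_superstring_def sublist_def by blast
    then have "p \<le> length ps'" unfolding p_def using occ[OF s] by (blast intro: Least_le)
    then have "drop p t = drop p ps' @ y' @ ss'" using y' by simp
    then show "sublist s (drop p t) \<or> sublist (rev s) (drop p t)" using y' by (metis sublist_appendI)
  qed
  moreover have "p \<le> length t" "prefix y (drop p t)" using pys by simp_all
  ultimately show ?thesis using that pys(1) by blast
qed

lemma length_le_ov_of_prefixes:
  assumes "prefix x t" "prefix y (drop p t)" "\<not> sublist y x"
  shows "length x \<le> p + ov x y"
proof (cases "length x \<le> p")
  case False
  obtain r where r: "t = x @ r" using assms(1) prefixE by blast
  obtain z where z: "drop p t = y @ z" using assms(2) prefixE by blast
  define k where "k = length x - p"
  have dp: "drop p t = drop p x @ r" "length (drop p x) = k" using r False unfolding k_def by auto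
  show ?thesis
  proof (cases "length y \<le> k")
    case True
    have "y = take (length y) (drop p t)" using z by simp
    also have "\<dots> = take (length y) (drop p x)" using dp True by simp
    finally have "prefix y (drop p x)" by (metis take_is_prefix)
    then have "sublist y x" by (meson prefix_imp_sublist sublist_drop sublist_order.order_trans)
    then show ?thesis using assms(3) by simp
  next
    case False
    have "k \<le> ov x y"
    proof (rule ov_greatest)
      show "k \<le> length x" "k \<le> length y" using False unfolding k_def by auto
      have "take k y = take k (drop p t)" using z False by simp
      also have "\<dots> = drop p x" using dp by simp
      also have "drop p x = drop (length x - k) x" using \<open>\<not> length x \<le> p\<close> unfolding k_def by simp
      finally show "drop (length x - k) x = take k y" by simp
    qed
    then show ?thesis unfolding k_def by simp
  qed
qed simp

lemma ham_path_insert_Cons: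
  "ham_path T xs \<Longrightarrow> rclass s \<notin> rclass ` T \<Longrightarrow> rclass x = rclass s
   \<Longrightarrow> ham_path (insert s T) (x # xs)"
  by (auto simp: ham_path_def)

text \<open>Reading the strings of \<open>T\<close> in \<open>t\<close> by their leftmost occurrences, consecutive strings
  overlap by at least the distance between their starting points.\<close>

lemma rev_superstring_ham_path_from:
  assumes "finite T" "rev_factor_free T" "x \<in> tilde T" "prefix x t" "rev_superstring T t"
  shows "\<exists>xs. ham_path T xs \<and> xs \<noteq> [] \<and> hd xs = x \<and> total_length T \<le> length t + path_ov xs"
  using assms
proof (induction "card T" arbitrary: T t x rule: less_induct)
  case less
  note rff = less.prems(2) and x = less.prems(3-4)
  obtain s where s: "s \<in> T" "rclass x = rclass s" using x(1) in_tilde_iff by blast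
  define T' where "T' = T - {s}"
  have T: "T = insert s T'" "s \<notin> T'" "finite T'" using s less.prems(1) unfolding T'_def by auto
  have new: "rclass s \<notin> rclass ` T'"
    using rev_factor_free_rclass_inj[OF rff s(1)] T(1,2) by blast
  have "length s = length x" using s(2) by (auto simp: rclass_eq_iff)
  then have total: "total_length T = length x + total_length T'"
    using T unfolding total_length_def by simp
  show ?case
  proof (cases "T' = {}")
    case True
    then have "ham_path T [x]" using ham_path_insert_Cons[of "{}" "[]" s x] s T(1)
      by (simp add: ham_path_def)
    moreover have "total_length T \<le> length t + path_ov [x]"
      using True total prefix_length_le[OF x(2)] by (simp add: total_length_def)
    ultimately show ?thesis by (intro exI[of _ "[x]"]) simp
  next
    case False
    have "rev_superstring T' t" using less.prems(5) unfolding rev_superstring_def T'_def by blast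
    then obtain p y where py: "p \<le> length t" "y \<in> tilde T'" "prefix y (drop p t)"
      "rev_superstring T' (drop p t)"
      using rev_superstring_leftmost[OF False] by metis
    have rff': "rev_factor_free T'" using rev_factor_free_subset[OF rff] unfolding T'_def by blast
    have "card T' < card T" unfolding T'_def by (rule card_Diff1_less[OF less.prems(1) s(1)])
    then obtain xs' where xs': "ham_path T' xs'" "xs' \<noteq> []" "hd xs' = y"
      "total_length T' \<le> length (drop p t) + path_ov xs'"
      using less.hyps T(3) rff' py(2-4) by blast
    have "rclass x \<noteq> rclass y" using py(2) new s(2) unfolding in_tilde_iff by auto
    moreover have "y \<in> tilde T" using py(2) T(1) unfolding tilde_def by auto
    ultimately have "length x \<le> p + ov x y"
      using length_le_ov_of_prefixes[OF x(2) py(3)] rev_factor_free_not_sublist[OF rff _ x(1)]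
      by auto
    moreover have "path_ov (x # xs') = ov x y + path_ov xs'"
      using xs'(2,3) by (simp add: path_ov_Cons)
    moreover have "ham_path T (x # xs')" using ham_path_insert_Cons[OF xs'(1) new s(2)] T(1) by simp
    ultimately show ?thesis using xs'(4) py(1) total by (intro exI[of _ "x # xs'"]) auto
  qed
qed

lemma rev_superstring_ham_path:
  assumes "finite T" "T \<noteq> {}" "rev_factor_free T" "rev_superstring T t"
  obtains xs where "ham_path T xs" "total_length T \<le> length t + path_ov xs"
proof -
  obtain p y where
    "p \<le> length t" "y \<in> tilde T" "prefix y (drop p t)" "rev_superstring T (drop p t)"
    using rev_superstring_leftmost[OF assms(2,4)] .
  then show ?thesis using rev_superstring_ham_path_from[OF assms(1,3)] that by fastforce
qed

lemma k_min_rev_superstring: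
  assumes "finite S"
  obtains t where "length t = k_min S" "rev_superstring S t"
proof -
  obtain l where l: "set l = S" using finite_list[OF assms] by blast
  have "rev_superstring S (concat l)"
    unfolding rev_superstring_def l[symmetric] by (auto intro: sublist_concat)
  then have "\<exists>k t. length t = k \<and> rev_superstring S t" by blast
  then have "\<exists>t. length t = k_min S \<and> rev_superstring S t"
    unfolding k_min_def rev_superstring_def by (rule LeastI_ex)
  then show ?thesis using that by blast
qed

lemma mrff_rev_factor_free: "mrff X Y \<Longrightarrow> rev_factor_free X \<Longrightarrow> Y = X"
  by (induction rule: mrff.induct) (auto simp: rev_factor_free_def)

theorem theorem2:
  fixes S :: "'a list set" and w :: "'a list"
  assumes "finite S" and "S \<noteq> {}" and "rev_factor_free S"
    and "greedy_R S w"
  shows "2 * (int (total_length S) - int (length w))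
           \<ge> int (total_length S) - int (k_min S)"
proof -
  obtain S' where "mrff S S'" "greedy_loop S' w" using assms(4) unfolding greedy_R_def by blast
  then have greedy: "greedy_loop S w" using mrff_rev_factor_free assms(3) by blast
  obtain t where t: "length t = k_min S" "rev_superstring S t"
    using k_min_rev_superstring[OF assms(1)] .
  obtain xs where xs: "ham_path S xs" "total_length S \<le> k_min S + path_ov xs"
    using rev_superstring_ham_path[OF assms(1-3) t(2)] t(1) by metis
  have "path_ov xs + 2 * length w \<le> 2 * total_length S"
    using greedy_loop_compression[OF greedy assms(1,3) xs(1)] .
  then show ?thesis using xs(2) by presburger
qed

end
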